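(* Let $\mathbb{H}$ be a reproducing kernel Hilbert space with inner product $\langle\cdot,\cdot\rangle$ and feature map $\phi$, and let $(X,A,Y)$ be jointly distributed with $Y=\langle\phi(X),y\rangle$ and $A=\langle\phi(X),a\rangle$ for some nonzero $y,a\in\mathbb{H}$, with $\operatorname{Var}(Y),\operatorname{Var}(A)>0$; let $\rho_{YA}$ be the correlation coefficient of $Y$ and $A$ and $\ell(u,v)=(u-v)^2$. Let $Z=g(X)$ be any (possibly randomized) representation. If $\operatorname{Var}\mathbb{E}[A\mid Z]=0$, then $$\inf_h\mathbb{E}[\ell(Y,h(Z))]\ge \operatorname{Var}(Y)\cdot\rho_{YA}^2.$$ If $\operatorname{Var}\mathbb{E}[Y\mid Z]=\operatorname{Var}(Y)$, then $$\inf_h\mathbb{E}[\ell(A,h(Z))]\le \operatorname{Var}(A)(1-\rho_{YA}^2).$$ The infima are over measurable functions $h$.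
   Context: A (possibly randomized) representation is $Z=g(X,S)$ for a measurable $g$ and auxiliary randomness $S$ independent of $(X,A,Y)$. $\phi(X)$ is assumed to have finite second moment in $\mathbb{H}$. *)

theory Defs
  imports "HOL-Probability.Probability"
begin

definition covariance :: "'a measure \<Rightarrow> ('a \<Rightarrow> real) \<Rightarrow> ('a \<Rightarrow> real) \<Rightarrow> real" where
  "covariance M U V =
     (\<integral>\<omega>. (U \<omega> - (\<integral>\<omega>'. U \<omega>' \<partial>M)) * (V \<omega> - (\<integral>\<omega>'. V \<omega>' \<partial>M)) \<partial>M)"

definition correlation :: "'a measure \<Rightarrow> ('a \<Rightarrow> real) \<Rightarrow> ('a \<Rightarrow> real) \<Rightarrow> real" where
  "correlation M U V =
     covariance M U V / sqrt (prob_space.variance M U * prob_space.variance M V)"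

text \<open>A feature map of a reproducing kernel Hilbert space: the Hilbert space H is
  identified with a space of functions on the input space via f \<mapsto> (\<lambda>x. \<langle>f, \<phi> x\<rangle>)
  (reproducing property), which must be injective.\<close>

definition rkhs_feature_map :: "('x \<Rightarrow> 'h::{real_inner,complete_space}) \<Rightarrow> bool" where
  "rkhs_feature_map \<phi> \<longleftrightarrow> inj (\<lambda>f. (\<lambda>x. inner f (\<phi> x)))"

definition best_sq_risk :: "'a measure \<Rightarrow> 'z measure \<Rightarrow> ('a \<Rightarrow> 'z) \<Rightarrow> ('a \<Rightarrow> real) \<Rightarrow> ennreal" where
  "best_sq_risk M Mz Z U =
     (INF h\<in>borel_measurable Mz. \<integral>\<^sup>+ \<omega>. ennreal ((U \<omega> - h (Z \<omega>))\<^sup>2) \<partial>M)"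

end

theory Submission
  imports Defs
begin

(*
  If Var E[A|Z] = 0, then E[A|Z] is a.s. the constant E A, so A is uncorrelated with every
  square-integrable function H of Z.  Hence Cov(Y - H, A) = Cov(Y, A), and Cauchy-Schwarz gives
  E (Y - H)^2 * Var A >= Cov(Y, A)^2 = Var Y * Var A * rho^2.

  If Var E[Y|Z] = Var Y, then E (Y - E[Y|Z])^2 = Var Y - Var E[Y|Z] = 0, so Y is a.s. a
  measurable function of Z (Doob-Dynkin).  The best linear predictor E A + t (Y - E Y) of A,
  with t = Cov(Y, A) / Var Y, is then a function of Z, and its risk is
  Var (A - t Y) = Var A * (1 - rho^2).
*)

definition square_integrable :: "'a measure \<Rightarrow> ('a \<Rightarrow> real) \<Rightarrow> bool" where
  "square_integrable M f \<longleftrightarrow> f \<in> borel_measurable M \<and> integrable M (\<lambda>x. (f x)\<^sup>2)"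

lemma borel_measurable_of_square_integrable:
  "square_integrable M f \<Longrightarrow> f \<in> borel_measurable M"
  by (simp add: square_integrable_def)

lemma integrable_mult_of_square_integrable:
  assumes f: "square_integrable M f" and g: "square_integrable M g"
  shows "integrable M (\<lambda>x. f x * g x)"
proof (rule Bochner_Integration.integrable_bound)
  show "integrable M (\<lambda>x. (f x)\<^sup>2 + (g x)\<^sup>2)"
    using f g by (simp add: square_integrable_def)
  show "(\<lambda>x. f x * g x) \<in> borel_measurable M"
    using f g by (simp add: square_integrable_def borel_measurable_times)
  have "\<bar>f x * g x\<bar> \<le> (f x)\<^sup>2 + (g x)\<^sup>2" for x
    using sum_squares_bound[of "\<bar>f x\<bar>" "\<bar>g x\<bar>"]
    by (simp add: abs_mult mult.assoc) (smt (verit) abs_ge_zero mult_nonneg_nonneg)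
  then show "AE x in M. norm (f x * g x) \<le> norm ((f x)\<^sup>2 + (g x)\<^sup>2)"
    by simp
qed

lemma (in finite_measure) integrable_of_square_integrable:
  "square_integrable M f \<Longrightarrow> integrable M f"
  by (rule square_integrable_imp_integrable) (simp_all add: square_integrable_def)

lemma square_integrable_add:
  assumes f: "square_integrable M f" and g: "square_integrable M g"
  shows "square_integrable M (\<lambda>x. f x + g x)"
proof -
  have "integrable M (\<lambda>x. (f x)\<^sup>2 + 2 * (f x * g x) + (g x)\<^sup>2)"
    using f g integrable_mult_of_square_integrable[OF f g] by (simp add: square_integrable_def)
  then show ?thesis
    using f g by (simp add: square_integrable_def power2_sum algebra_simps borel_measurable_add)
qed

lemma square_integrable_cmult:
  "square_integrable M f \<Longrightarrow> square_integrable M (\<lambda>x. c * f x)"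
  by (simp add: square_integrable_def power_mult_distrib borel_measurable_times)

lemma square_integrable_diff:
  assumes "square_integrable M f" and "square_integrable M g"
  shows "square_integrable M (\<lambda>x. f x - g x)"
  using square_integrable_add[OF assms(1) square_integrable_cmult[OF assms(2), of "-1"]] by simp

lemma (in finite_measure) square_integrable_const: "square_integrable M (\<lambda>_. c)"
  by (simp add: square_integrable_def)

lemma (in finite_measure) square_integrable_diff_const:
  "square_integrable M f \<Longrightarrow> square_integrable M (\<lambda>x. f x - c)"
  using square_integrable_diff square_integrable_const by blast

lemma square_integrable_inner:
  fixes \<psi> :: "'a \<Rightarrow> 'h::real_inner"
  assumes [measurable]: "\<psi> \<in> borel_measurable M"
    and \<psi>_L2: "integrable M (\<lambda>x. (norm (\<psi> x))\<^sup>2)"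
  shows "square_integrable M (\<lambda>x. inner (\<psi> x) v)"
  unfolding square_integrable_def
proof
  show inner_M [measurable]: "(\<lambda>x. inner (\<psi> x) v) \<in> borel_measurable M"
    by (rule borel_measurable_continuous_on[OF _ assms(1)]) (intro continuous_intros)
  show "integrable M (\<lambda>x. (inner (\<psi> x) v)\<^sup>2)"
  proof (rule Bochner_Integration.integrable_bound)
    show "integrable M (\<lambda>x. (norm v)\<^sup>2 * (norm (\<psi> x))\<^sup>2)" using \<psi>_L2 by simp
    have "\<bar>inner (\<psi> x) v\<bar>\<^sup>2 \<le> (norm (\<psi> x) * norm v)\<^sup>2" for x
      by (rule power_mono[OF Cauchy_Schwarz_ineq2]) simp
    then show "AE x in M. norm ((inner (\<psi> x) v)\<^sup>2) \<le> norm ((norm v)\<^sup>2 * (norm (\<psi> x))\<^sup>2)"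
      by (simp add: power_mult_distrib mult.commute)
  qed measurable
qed

lemma AE_eq_0_of_integral_square_eq_0:
  assumes "square_integrable M f" and "(\<integral>x. (f x)\<^sup>2 \<partial>M) = 0"
  shows "AE x in M. f x = 0"
  using integral_nonneg_eq_0_iff_AE[where f="\<lambda>x. (f x)\<^sup>2" and M=M] assms
  by (simp add: square_integrable_def)

lemma integral_square_diff_cmult:
  assumes f: "square_integrable M f" and g: "square_integrable M g"
  shows "(\<integral>x. (f x - t * g x)\<^sup>2 \<partial>M)
    = (\<integral>x. (f x)\<^sup>2 \<partial>M) - 2 * t * (\<integral>x. f x * g x \<partial>M) + t\<^sup>2 * (\<integral>x. (g x)\<^sup>2 \<partial>M)"
proof -
  have "(\<lambda>x. (f x - t * g x)\<^sup>2) = (\<lambda>x. (f x)\<^sup>2 - 2 * t * (f x * g x) + t\<^sup>2 * (g x)\<^sup>2)"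
    by (simp add: fun_eq_iff power2_diff algebra_simps)
  then show ?thesis
    using integrable_mult_of_square_integrable[OF f g] f g
    by (simp add: square_integrable_def)
qed

lemma Cauchy_Schwarz_integral:
  assumes f: "square_integrable M f" and g: "square_integrable M g"
  shows "(\<integral>x. f x * g x \<partial>M)\<^sup>2 \<le> (\<integral>x. (f x)\<^sup>2 \<partial>M) * (\<integral>x. (g x)\<^sup>2 \<partial>M)"
proof (cases "(\<integral>x. (g x)\<^sup>2 \<partial>M) = 0")
  case True
  then have "AE x in M. f x * g x = 0"
    using AE_eq_0_of_integral_square_eq_0[OF g] by auto
  then show ?thesis
    using True by (simp add: integral_eq_zero_AE)
next
  case False
  define b where "b = (\<integral>x. f x * g x \<partial>M)"
  define c where "c = (\<integral>x. (g x)\<^sup>2 \<partial>M)"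
  have "c > 0"
    using False by (simp add: c_def less_le)
  have "0 \<le> (\<integral>x. (f x - b / c * g x)\<^sup>2 \<partial>M)"
    by simp
  also have "\<dots> = (\<integral>x. (f x)\<^sup>2 \<partial>M) - b\<^sup>2 / c"
    using \<open>c > 0\<close> unfolding integral_square_diff_cmult[OF f g] b_def[symmetric] c_def[symmetric]
    by (simp add: field_simps power2_eq_square)
  finally show ?thesis
    using \<open>c > 0\<close> by (simp add: b_def[symmetric] c_def[symmetric] field_simps)
qed

lemma ereal_eq_INF_rat_above:
  "ereal r = (INF q. if r < real_of_rat q then ereal (real_of_rat q) else \<infinity>)"
proof (rule antisym)
  show "ereal r \<le> (INF q. if r < real_of_rat q then ereal (real_of_rat q) else \<infinity>)"
    by (rule INF_greatest) simp
  show "(INF q. if r < real_of_rat q then ereal (real_of_rat q) else \<infinity>) \<le> ereal r"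
  proof (rule dense_ge)
    fix y
    assume "ereal r < y"
    then obtain s where s: "ereal r < ereal s" "ereal s < y"
      using ereal_dense2 by blast
    then obtain q where q: "r < real_of_rat q" "real_of_rat q < s"
      using of_rat_dense[of r s] by auto
    have "(INF q. if r < real_of_rat q then ereal (real_of_rat q) else \<infinity>) \<le> ereal (real_of_rat q)"
      using q(1) by (intro INF_lower2[of q]) simp_all
    also have "\<dots> < ereal s"
      using q(2) by simp
    also have "\<dots> < y"
      by (fact s(2))
    finally show "(INF q. if r < real_of_rat q then ereal (real_of_rat q) else \<infinity>) \<le> y"
      by (rule less_imp_le)
  qed
qed

lemma borel_measurable_vimage_algebra_factor:
  fixes f :: "'a \<Rightarrow> real"
  assumes Z: "Z \<in> X \<rightarrow> space N" and f [measurable]: "f \<in> borel_measurable (vimage_algebra X Z N)"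
  shows "\<exists>h \<in> borel_measurable N. \<forall>x\<in>X. f x = h (Z x)"
proof -
  have "\<exists>B\<in>sets N. Z -` B \<inter> X = {x\<in>X. f x < real_of_rat q}" for q
  proof -
    have "{x\<in>space (vimage_algebra X Z N). f x < real_of_rat q} \<in> sets (vimage_algebra X Z N)"
      by measurable
    then show ?thesis
      unfolding sets_vimage_algebra2[OF Z] by auto
  qed
  then obtain B where B_N [measurable]: "\<And>q. B q \<in> sets N"
    and B: "\<And>q. Z -` B q \<inter> X = {x\<in>X. f x < real_of_rat q}"
    by metis
  \<comment> \<open>Recover \<open>f\<close> from its rational sublevel sets \<open>{f < q} = Z\<inverse> B q\<close>.\<close>
  define h where "h z = real_of_ereal (INF q. if z \<in> B q then ereal (real_of_rat q) else \<infinity>)" for z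
  have "h \<in> borel_measurable N"
    unfolding h_def by measurable
  moreover have "f x = h (Z x)" if "x \<in> X" for x
  proof -
    have "Z x \<in> B q \<longleftrightarrow> f x < real_of_rat q" for q
      using B[of q] that by blast
    then have "(INF q. if Z x \<in> B q then ereal (real_of_rat q) else \<infinity>) = ereal (f x)"
      by (simp only: ereal_eq_INF_rat_above[symmetric])
    then show ?thesis
      by (simp add: h_def)
  qed
  ultimately show ?thesis
    by blast
qed

lemma covariance_commute: "covariance M U V = covariance M V U"
  by (simp add: covariance_def mult.commute)

lemma (in prob_space) power2_correlation:
  "(correlation M U V)\<^sup>2 = (covariance M U V)\<^sup>2 / (variance U * variance V)"
  using variance_positive[of U] variance_positive[of V]
  by (simp add: correlation_def power_divide)

lemma (in prob_space) covariance_eq_expectation_mult_centered: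
  assumes U: "square_integrable M U" and V: "square_integrable M V"
  shows "covariance M U V = expectation (\<lambda>x. U x * (V x - expectation V))"
proof -
  have V': "square_integrable M (\<lambda>x. V x - expectation V)"
    using V by (rule square_integrable_diff_const)
  have "covariance M U V
      = expectation (\<lambda>x. U x * (V x - expectation V)) - expectation U * expectation (\<lambda>x. V x - expectation V)"
    using integrable_mult_of_square_integrable[OF U V'] integrable_of_square_integrable[OF V']
    by (simp add: covariance_def left_diff_distrib)
  also have "expectation (\<lambda>x. V x - expectation V) = 0"
    using integrable_of_square_integrable[OF V] by (simp add: prob_space)
  finally show ?thesis by simp
qed

lemma (in prob_space) variance_diff_cmult:
  assumes A: "square_integrable M A" and Y: "square_integrable M Y"
  shows "variance (\<lambda>x. A x - t * Y x)
    = variance A - 2 * t * covariance M A Y + t\<^sup>2 * variance Y"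
proof -
  have E: "expectation (\<lambda>x. A x - t * Y x) = expectation A - t * expectation Y"
    using integrable_of_square_integrable[OF A] integrable_of_square_integrable[OF Y] by simp
  have "variance (\<lambda>x. A x - t * Y x)
      = expectation (\<lambda>x. (A x - expectation A - t * (Y x - expectation Y))\<^sup>2)"
    unfolding E by (simp add: algebra_simps)
  also have "\<dots> = variance A - 2 * t * covariance M A Y + t\<^sup>2 * variance Y"
    using integral_square_diff_cmult[OF square_integrable_diff_const[OF A] square_integrable_diff_const[OF Y]]
    by (simp add: covariance_def)
  finally show ?thesis .
qed

lemma (in prob_space) AE_eq_expectation_of_variance_eq_0:
  assumes "square_integrable M f" and "variance f = 0"
  shows "AE x in M. f x = expectation f"
  using AE_eq_0_of_integral_square_eq_0[OF square_integrable_diff_const[OF assms(1)]] assms(2)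
  by simp

lemma (in prob_space) square_integrable_real_cond_exp:
  assumes "sigma_finite_subalgebra M F" and f: "square_integrable M f"
  shows "square_integrable M (real_cond_exp M F f)"
proof -
  interpret sigma_finite_subalgebra M F by fact
  have "integrable M (\<lambda>x. (real_cond_exp M F f x)\<^sup>2)"
    by (rule integrable_convex_cond_exp[where I=UNIV])
      (use f integrable_of_square_integrable[OF f] in \<open>auto simp: square_integrable_def convex_power2\<close>)
  then show ?thesis
    by (simp add: square_integrable_def)
qed

lemma (in prob_space) covariance_eq_0_of_variance_real_cond_exp_eq_0:
  assumes sub: "sigma_finite_subalgebra M F"
    and A: "square_integrable M A" and H: "square_integrable M H" and H_F: "H \<in> borel_measurable F"
    and var_0: "variance (real_cond_exp M F A) = 0"
  shows "covariance M H A = 0"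
proof -
  interpret sigma_finite_subalgebra M F by (rule sub)
  define C where "C = real_cond_exp M F A"
  have C: "square_integrable M C"
    unfolding C_def using sub A by (rule square_integrable_real_cond_exp)
  have "expectation C = expectation A"
    unfolding C_def using integrable_of_square_integrable[OF A] by (rule real_cond_exp_int(2))
  then have C_const: "AE x in M. C x = expectation A"
    using AE_eq_expectation_of_variance_eq_0[OF C] var_0 by (simp add: C_def)
  have "expectation (\<lambda>x. H x * A x) = expectation (\<lambda>x. H x * C x)"
    unfolding C_def using integrable_mult_of_square_integrable[OF H A] H_F A
    by (simp add: real_cond_exp_intg(2) square_integrable_def)
  also have "\<dots> = expectation (\<lambda>x. H x * expectation A)"
    by (rule integral_cong_AE) (use C H C_const in \<open>auto simp: square_integrable_def\<close>)
  finally have "expectation (\<lambda>x. H x * A x) = expectation H * expectation A"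
    by simp
  then show ?thesis
    using covariance_eq_expectation_mult_centered[OF H A]
      integrable_mult_of_square_integrable[OF H A] integrable_of_square_integrable[OF H]
    by (simp add: right_diff_distrib)
qed

lemma (in prob_space) AE_eq_real_cond_exp_of_variance_eq:
  assumes sub: "sigma_finite_subalgebra M F" and Y: "square_integrable M Y"
    and var_eq: "variance (real_cond_exp M F Y) = variance Y"
  shows "AE x in M. Y x = real_cond_exp M F Y x"
proof -
  interpret sigma_finite_subalgebra M F by (rule sub)
  define C where "C = real_cond_exp M F Y"
  have C: "square_integrable M C"
    unfolding C_def using sub Y by (rule square_integrable_real_cond_exp)
  have E_C: "expectation C = expectation Y"
    unfolding C_def using integrable_of_square_integrable[OF Y] by (rule real_cond_exp_int(2))
  have "expectation (\<lambda>x. C x * C x) = expectation (\<lambda>x. C x * Y x)"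
    unfolding C_def using integrable_mult_of_square_integrable[OF C Y] Y
    by (intro real_cond_exp_intg(2)) (simp_all add: C_def square_integrable_def)
  then have "expectation (\<lambda>x. (Y x - 1 * C x)\<^sup>2)
      = expectation (\<lambda>x. (Y x)\<^sup>2) - expectation (\<lambda>x. (C x)\<^sup>2)"
    unfolding integral_square_diff_cmult[OF Y C] by (simp add: power2_eq_square mult.commute)
  also have "\<dots> = variance Y - variance C"
    using variance_eq[of Y] variance_eq[of C] E_C integrable_of_square_integrable[OF Y]
      integrable_of_square_integrable[OF C] Y C
    by (simp add: square_integrable_def)
  also have "\<dots> = 0"
    using var_eq by (simp add: C_def)
  finally have "AE x in M. Y x - C x = 0"
    using AE_eq_0_of_integral_square_eq_0[OF square_integrable_diff[OF Y C]] by simp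
  then show ?thesis
    by (simp add: C_def)
qed

lemma (in prob_space) sigma_finite_subalgebra_vimage_algebra:
  assumes "Z \<in> measurable M Mz"
  shows "sigma_finite_subalgebra M (vimage_algebra (space M) Z Mz)"
proof (rule finite_measure_subalgebra_is_sigma_finite)
  have "subalgebra M (vimage_algebra (space M) Z Mz)"
    using sets_image_in_sets[OF refl assms] by (simp add: subalgebra_def)
  then show "finite_measure_subalgebra M (vimage_algebra (space M) Z Mz)"
    by (simp add: finite_measure_subalgebra_def finite_measure_subalgebra_axioms_def)
qed

lemma (in prob_space) covariance_square_div_variance_le_expectation_square_diff:
  assumes sub: "sigma_finite_subalgebra M F"
    and Y: "square_integrable M Y" and A: "square_integrable M A"
    and H: "square_integrable M H" and H_F: "H \<in> borel_measurable F"
    and var_A: "variance A > 0" and var_0: "variance (real_cond_exp M F A) = 0"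
  shows "(covariance M Y A)\<^sup>2 / variance A \<le> expectation (\<lambda>x. (Y x - H x)\<^sup>2)"
proof -
  have A': "square_integrable M (\<lambda>x. A x - expectation A)"
    using A by (rule square_integrable_diff_const)
  have "covariance M Y A = expectation (\<lambda>x. (Y x - H x) * (A x - expectation A))"
    using covariance_eq_expectation_mult_centered[OF Y A] covariance_eq_expectation_mult_centered[OF H A]
      covariance_eq_0_of_variance_real_cond_exp_eq_0[OF sub A H H_F var_0]
      integrable_mult_of_square_integrable[OF Y A'] integrable_mult_of_square_integrable[OF H A']
    by (simp add: left_diff_distrib)
  then have "(covariance M Y A)\<^sup>2 \<le> expectation (\<lambda>x. (Y x - H x)\<^sup>2) * variance A"
    using Cauchy_Schwarz_integral[OF square_integrable_diff[OF Y H] A'] by simp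
  then show ?thesis
    using var_A by (simp add: divide_le_eq)
qed

lemma (in prob_space) best_sq_risk_ge_of_variance_real_cond_exp_eq_0:
  fixes Z :: "'a \<Rightarrow> 'z"
  assumes Z: "Z \<in> measurable M Mz"
    and Y: "square_integrable M Y" and A: "square_integrable M A"
    and var_A: "variance A > 0"
    and var_0: "variance (real_cond_exp M (vimage_algebra (space M) Z Mz) A) = 0"
  shows "ennreal ((covariance M Y A)\<^sup>2 / variance A) \<le> best_sq_risk M Mz Z Y"
  unfolding best_sq_risk_def
proof (rule INF_greatest)
  fix h :: "'z \<Rightarrow> real"
  assume h: "h \<in> borel_measurable Mz"
  define H where "H x = h (Z x)" for x
  have H_F: "H \<in> borel_measurable (vimage_algebra (space M) Z Mz)"
    unfolding H_def using Z h by (intro measurable_compose[OF measurable_vimage_algebra1]) (auto simp: measurable_def)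
  have Y_M [measurable]: "Y \<in> borel_measurable M"
    using Y by (rule borel_measurable_of_square_integrable)
  have H_M [measurable]: "H \<in> borel_measurable M"
    unfolding H_def using Z h by measurable
  show "ennreal ((covariance M Y A)\<^sup>2 / variance A) \<le> (\<integral>\<^sup>+ x. ennreal ((Y x - h (Z x))\<^sup>2) \<partial>M)"
  proof (cases "integrable M (\<lambda>x. (Y x - H x)\<^sup>2)")
    case True
    then have Y_H: "square_integrable M (\<lambda>x. Y x - H x)"
      by (simp add: square_integrable_def)
    have "square_integrable M H"
      using square_integrable_diff[OF Y Y_H] by simp
    then have "(covariance M Y A)\<^sup>2 / variance A \<le> expectation (\<lambda>x. (Y x - H x)\<^sup>2)"
      using covariance_square_div_variance_le_expectation_square_diff
        [OF sigma_finite_subalgebra_vimage_algebra[OF Z] Y A _ H_F var_A var_0]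
      by simp
    also have "ennreal (expectation (\<lambda>x. (Y x - H x)\<^sup>2)) = (\<integral>\<^sup>+ x. ennreal ((Y x - H x)\<^sup>2) \<partial>M)"
      using True by (intro nn_integral_eq_integral[symmetric]) auto
    finally show ?thesis
      by (simp add: H_def ennreal_leI)
  next
    case False
    then have "(\<integral>\<^sup>+ x. ennreal ((Y x - H x)\<^sup>2) \<partial>M) = \<infinity>"
      by (simp add: integrable_iff_bounded less_top[symmetric])
    then show ?thesis
      by (simp add: H_def)
  qed
qed

lemma (in prob_space) best_sq_risk_le_variance_diff_cmult:
  fixes Z :: "'a \<Rightarrow> 'z"
  assumes Z: "Z \<in> measurable M Mz" and h: "h \<in> borel_measurable Mz"
    and Y_h: "AE x in M. Y x = h (Z x)"
    and A: "square_integrable M A" and Y: "square_integrable M Y"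
  shows "best_sq_risk M Mz Z A \<le> ennreal (variance (\<lambda>x. A x - t * Y x))"
proof -
  define p where "p z = expectation A + t * (h z - expectation Y)" for z
  have p: "p \<in> borel_measurable Mz"
    unfolding p_def using h by measurable
  have E: "expectation (\<lambda>x. A x - t * Y x) = expectation A - t * expectation Y"
    using integrable_of_square_integrable[OF A] integrable_of_square_integrable[OF Y] by simp
  have D: "square_integrable M (\<lambda>x. A x - t * Y x - expectation (\<lambda>x. A x - t * Y x))"
    using square_integrable_diff[OF A square_integrable_cmult[OF Y]] by (rule square_integrable_diff_const)
  have "best_sq_risk M Mz Z A \<le> (\<integral>\<^sup>+ x. ennreal ((A x - p (Z x))\<^sup>2) \<partial>M)"
    unfolding best_sq_risk_def using p by (rule INF_lower)
  also have "\<dots> = (\<integral>\<^sup>+ x. ennreal ((A x - t * Y x - expectation (\<lambda>x. A x - t * Y x))\<^sup>2) \<partial>M)"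
    using Y_h by (intro nn_integral_cong_AE) (auto simp: p_def E algebra_simps)
  also have "\<dots> = ennreal (variance (\<lambda>x. A x - t * Y x))"
    using D by (intro nn_integral_eq_integral) (auto simp: square_integrable_def)
  finally show ?thesis .
qed

lemma (in prob_space) best_sq_risk_le_of_variance_real_cond_exp_eq:
  fixes Z :: "'a \<Rightarrow> 'z"
  assumes Z: "Z \<in> measurable M Mz"
    and Y: "square_integrable M Y" and A: "square_integrable M A"
    and var_Y: "variance Y > 0"
    and var_eq: "variance (real_cond_exp M (vimage_algebra (space M) Z Mz) Y) = variance Y"
  shows "best_sq_risk M Mz Z A \<le> ennreal (variance A - (covariance M Y A)\<^sup>2 / variance Y)"
proof -
  define C where "C = real_cond_exp M (vimage_algebra (space M) Z Mz) Y"
  have Z_space: "Z \<in> space M \<rightarrow> space Mz"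
    using Z by (simp add: measurable_def)
  obtain h where h: "h \<in> borel_measurable Mz" and C_h: "\<forall>x\<in>space M. C x = h (Z x)"
    using borel_measurable_vimage_algebra_factor[OF Z_space, of C] by (auto simp: C_def)
  have "AE x in M. Y x = h (Z x)"
    using AE_eq_real_cond_exp_of_variance_eq[OF sigma_finite_subalgebra_vimage_algebra[OF Z] Y var_eq] C_h
    by (auto simp: C_def)
  then have "best_sq_risk M Mz Z A
      \<le> ennreal (variance (\<lambda>x. A x - covariance M Y A / variance Y * Y x))"
    by (rule best_sq_risk_le_variance_diff_cmult[OF Z h _ A Y])
  also have "variance (\<lambda>x. A x - covariance M Y A / variance Y * Y x)
      = variance A - (covariance M Y A)\<^sup>2 / variance Y"
  proof -
    have optimum: "a - 2 * (c / v) * c + (c / v)\<^sup>2 * v = a - c\<^sup>2 / v" if "v > 0" for a c v :: real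
      using that by (simp add: field_simps power2_eq_square)
    show ?thesis
      by (simp only: variance_diff_cmult[OF A Y] covariance_commute[of M A]) (rule optimum[OF var_Y])
  qed
  finally show ?thesis .
qed

theorem corollary3:
  fixes M :: "'w measure" and Mx :: "'x measure" and Ms :: "'s measure" and Mz :: "'z measure"
    and X :: "'w \<Rightarrow> 'x" and S :: "'w \<Rightarrow> 's" and g :: "'x \<times> 's \<Rightarrow> 'z"
    and \<phi> :: "'x \<Rightarrow> 'h::{real_inner,complete_space}"
    and y a :: 'h and Y A :: "'w \<Rightarrow> real"
  assumes P: "prob_space M"
    and rkhs: "rkhs_feature_map \<phi>"
    and X_meas: "X \<in> measurable M Mx"
    and phiX_meas: "(\<lambda>\<omega>. \<phi> (X \<omega>)) \<in> borel_measurable M"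
    and phiX_L2: "integrable M (\<lambda>\<omega>. (norm (\<phi> (X \<omega>)))\<^sup>2)"
    and Y_def: "\<And>\<omega>. Y \<omega> = inner (\<phi> (X \<omega>)) y"
    and A_def: "\<And>\<omega>. A \<omega> = inner (\<phi> (X \<omega>)) a"
    and y_nz: "y \<noteq> 0" and a_nz: "a \<noteq> 0"
    and varY_pos: "prob_space.variance M Y > 0"
    and varA_pos: "prob_space.variance M A > 0"
    and S_meas: "S \<in> measurable M Ms"
    and S_indep: "prob_space.indep_set M (sets (vimage_algebra (space M) S Ms))
         (sets (vimage_algebra (space M) (\<lambda>\<omega>. (X \<omega>, A \<omega>, Y \<omega>)) (Mx \<Otimes>\<^sub>M (borel \<Otimes>\<^sub>M borel))))"
    and g_meas: "g \<in> measurable (Mx \<Otimes>\<^sub>M Ms) Mz"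
  defines "Z \<equiv> (\<lambda>\<omega>. g (X \<omega>, S \<omega>))"
  shows
    "(prob_space.variance M (real_cond_exp M (vimage_algebra (space M) Z Mz) A) = 0 \<longrightarrow>
        best_sq_risk M Mz Z Y \<ge> ennreal (prob_space.variance M Y * (correlation M Y A)\<^sup>2))
     \<and>
     (prob_space.variance M (real_cond_exp M (vimage_algebra (space M) Z Mz) Y) = prob_space.variance M Y \<longrightarrow>
        best_sq_risk M Mz Z A \<le> ennreal (prob_space.variance M A * (1 - (correlation M Y A)\<^sup>2)))"
proof -
  interpret prob_space M by (rule P)
  have Z: "Z \<in> measurable M Mz"
    unfolding Z_def using g_meas X_meas S_meas by measurable
  have "Y = (\<lambda>\<omega>. inner (\<phi> (X \<omega>)) y)" and "A = (\<lambda>\<omega>. inner (\<phi> (X \<omega>)) a)"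
    using Y_def A_def by auto
  then have Y: "square_integrable M Y" and A: "square_integrable M A"
    using square_integrable_inner[OF phiX_meas phiX_L2] by simp_all
  have ge_arith: "v * (c\<^sup>2 / (v * w)) = c\<^sup>2 / w" and le_arith: "w * (1 - c\<^sup>2 / (v * w)) = w - c\<^sup>2 / v"
    if "v > 0" "w > 0" for c v w :: real
    using that by (simp_all add: field_simps)
  have bound_ge: "variance Y * (correlation M Y A)\<^sup>2 = (covariance M Y A)\<^sup>2 / variance A"
    and bound_le: "variance A * (1 - (correlation M Y A)\<^sup>2) = variance A - (covariance M Y A)\<^sup>2 / variance Y"
    unfolding power2_correlation by (rule ge_arith[OF varY_pos varA_pos], rule le_arith[OF varY_pos varA_pos])
  show ?thesis
    unfolding bound_ge bound_le
    using best_sq_risk_ge_of_variance_real_cond_exp_eq_0[OF Z Y A varA_pos]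
      best_sq_risk_le_of_variance_real_cond_exp_eq[OF Z Y A varY_pos]
    by (intro conjI impI)
qed

end
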